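(* Let $n\ge 1$. For a permutation $\pi\in S_n$, let $\Phi_2(\pi)$ be the deco polyomino of height $n$ whose code $(a_n,a_{n-1},\ldots,a_1)$ equals the right inversion vector $(c_1,c_2,\ldots,c_n)$ of $\pi$, i.e. $a_{n+1-i}=c_i$ for $i=1,\ldots,n$. Then $\pi$ is $321$-avoiding if and only if $\Phi_2(\pi)$ is a parallelogram polyomino.
   Context: Cells are unit squares $[i,i+1]\times[j,j+1]$ with integer $i,j$; a polyomino is a finite edge-connected set of cells, up to translation. A directed polyomino has a distinguished cell (the source) such that every cell can be reached from the source by a path of cells moving only North or East inside the polyomino. It is column-convex if each column (intersection with a vertical strip $[i,i+1]\times\mathbb{R}$) is connected. The (directed) height of a directed polyomino is the number of distinct diagonal lines $x+y=\text{const}$ passing through centers of its cells. A deco polyomino is a directed column-convex polyomino whose height is attained only in its last (rightmost) column, i.e. cells on the maximal diagonal lie only in the last column. Every deco polyomino of height $n$ is built uniquely by a sequence of $n$ steps starting from the empty polyomino; at step $j$ ($j=1,\ldots,n$) one performs either an elevation (add a cell at the bottom of the leftmost column of the current polyomino; step 1 is always of this kind) or a column pasting (add a new column of $k$ cells, $1\le k\le j-1$, to the left of the current polyomino so that the bottoms of the first two columns lie at the same level). Set $a_j=0$ for an elevation and $a_j=k$ for pasting a column of length $k$; the code of the polyomino is $(a_n,a_{n-1},\ldots,a_1)$, with $0\le a_j\le j-1$, and this gives a bijection between deco polyominoes of height $n$ and such sequences. The right inversion vector of $\pi=\pi_1\cdots\pi_n$ is $(c_1,\ldots,c_n)$ with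 $c_i=\#\{j>i:\pi_j<\pi_i\}$; it determines $\pi$ uniquely and $0\le c_i\le n-i$. A permutation is $321$-avoiding if there are no indices $i<j<k$ with $\pi_i>\pi_j>\pi_k$. A parallelogram polyomino is a polyomino bounded by two lattice paths using steps $(1,0)$ and $(0,1)$ which intersect only at their common origin and common endpoint. *)

theory Defs
  imports "HOL-Combinatorics.Combinatorics"
begin

type_synonym cell = "int \<times> int"
  (* the cell (i,j) is the unit square [i,i+1] x [j,j+1] *)

text \<open>The argument a = 0 is an elevation (add a cell at the
bottom of the leftmost column; from the empty polyomino this creates the first cell);
a = k > 0 pastes a column of k cells to the left of the leftmost column, with its bottom
at the level of the bottom of the (previously) leftmost column.\<close>
definition deco_step :: "cell set \<Rightarrow> nat \<Rightarrow> cell set" where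
  "deco_step P a =
     (if P = {} then {(0,0)}
      else let c = Min (fst ` P); b = Min {y. (c, y) \<in> P} in
        if a = 0 then insert (c, b - 1) P
        else P \<union> {(c - 1, b + int t) | t. t < a})"

text \<open>The deco polyomino whose construction steps are given in order
step 1, step 2, ..., step n, i.e. the list [a_1, ..., a_n]; its code is (a_n, ..., a_1).\<close>
definition deco_of_steps :: "nat list \<Rightarrow> cell set" where
  "deco_of_steps as = foldl deco_step {} as"

definition right_inv :: "(nat \<Rightarrow> nat) \<Rightarrow> nat \<Rightarrow> nat \<Rightarrow> nat" where
  "right_inv \<pi> n i = card {j. i < j \<and> j \<le> n \<and> \<pi> j < \<pi> i}"

definition avoids_321 :: "(nat \<Rightarrow> nat) \<Rightarrow> nat \<Rightarrow> bool" where
  "avoids_321 \<pi> n \<longleftrightarrow>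
     \<not> (\<exists>i j k. 1 \<le> i \<and> i < j \<and> j < k \<and> k \<le> n \<and> \<pi> i > \<pi> j \<and> \<pi> j > \<pi> k)"

definition Phi2 :: "(nat \<Rightarrow> nat) \<Rightarrow> nat \<Rightarrow> cell set" where
  "Phi2 \<pi> n = deco_of_steps (map (\<lambda>j. right_inv \<pi> n (n + 1 - j)) [1..<n+1])"

text \<open>Lattice paths: True = east step (1,0), False = north step (0,1).\<close>
fun path_pts :: "cell \<Rightarrow> bool list \<Rightarrow> cell list" where
  "path_pts (x, y) [] = [(x, y)]"
| "path_pts (x, y) (True # ss) = (x, y) # path_pts (x + 1, y) ss"
| "path_pts (x, y) (False # ss) = (x, y) # path_pts (x, y + 1) ss"

fun east_starts :: "cell \<Rightarrow> bool list \<Rightarrow> cell set" where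
  "east_starts (x, y) [] = {}"
| "east_starts (x, y) (True # ss) = insert (x, y) (east_starts (x + 1, y) ss)"
| "east_starts (x, y) (False # ss) = east_starts (x, y + 1) ss"

text \<open>P is the set of cells enclosed by two lattice paths with a common origin and
common endpoint that meet only there: in every column i, the cells between the
east step of the lower path p and the east step of the upper path q.\<close>
definition parallelogram_polyomino :: "cell set \<Rightarrow> bool" where
  "parallelogram_polyomino P \<longleftrightarrow>
     (\<exists>s p q. p \<noteq> [] \<and> length p = length q \<and>
        last (path_pts s p) = last (path_pts s q) \<and>
        set (path_pts s p) \<inter> set (path_pts s q) = {s, last (path_pts s p)} \<and>
        P = {(i, j). \<exists>y1 y2. (i, y1) \<in> east_starts s p \<and> (i, y2) \<in> east_starts s q
                             \<and> y1 \<le> j \<and> j < y2})"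

end

theory Submission
  imports Defs
begin

text \<open>Reading the code \<open>(a\<^sub>n, \<dots>, a\<^sub>1)\<close> from the right, a deco polyomino stays a parallelogram
  polyomino as long as every pasted column is at most as long as the current leftmost column:
  elevations and such pastes move the two boundary paths in lockstep, while a longer paste makes the
  upper boundary step down, a defect that no later step can repair. For the right inversion vector
  \<open>(c\<^sub>1, \<dots>, c\<^sub>n)\<close> the leftmost column before pasting \<open>c\<^sub>i\<close> has height
  \<open>min (n - i, min {c\<^sub>l + (l - i - 1) | l > i, c\<^sub>l > 0})\<close>. If \<open>\<pi>\<close> avoids 321, every \<open>l > i\<close> with
  \<open>c\<^sub>l > 0\<close> has \<open>\<pi>\<^sub>i < \<pi>\<^sub>l\<close>, whence \<open>c\<^sub>i \<le> c\<^sub>l + (l - i - 1)\<close>. Conversely, a pattern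
  \<open>\<pi>\<^sub>i > \<pi>\<^sub>j > \<pi>\<^sub>k\<close>, with \<open>i\<close> the last position before \<open>j\<close> above \<open>\<pi>\<^sub>j\<close>, gives
  \<open>c\<^sub>i \<ge> c\<^sub>j + (j - i)\<close> with \<open>c\<^sub>j > 0\<close>, a paste that does not fit.\<close>

section \<open>Lattice paths and the cells between them\<close>

lemma path_pts_not_Nil [simp]: "path_pts s ss \<noteq> []"
  by (induction s ss rule: path_pts.induct) auto

lemma path_pts_ge: "(a, b) \<in> set (path_pts (x, y) ss) \<Longrightarrow> x \<le> a \<and> y \<le> b"
  by (induction "(x, y)" ss arbitrary: x y rule: path_pts.induct) fastforce+

lemma east_starts_ge: "(a, b) \<in> east_starts (x, y) ss \<Longrightarrow> x \<le> a \<and> y \<le> b"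
  by (induction "(x, y)" ss arbitrary: x y rule: east_starts.induct) fastforce+

lemma east_starts_mono:
  "(a, b) \<in> east_starts (x, y) ss \<Longrightarrow> (a', b') \<in> east_starts (x, y) ss \<Longrightarrow> a < a' \<Longrightarrow> b \<le> b'"
  by (induction "(x, y)" ss arbitrary: x y rule: east_starts.induct) (fastforce dest: east_starts_ge)+

lemma east_starts_replicate_north:
  "east_starts (x, y) (replicate h False @ ss) = east_starts (x, y + int h) ss"
  by (induction h arbitrary: y) (auto simp: add.assoc)

lemma path_pts_replicate_north:
  "set (path_pts (x, y) (replicate h False @ ss)) = Pair x ` {y..<y + int h} \<union> set (path_pts (x, y + int h) ss)"
  by (induction h arbitrary: y) (auto simp: add.assoc image_iff)

lemma last_path_pts_replicate_north:
  "last (path_pts (x, y) (replicate h False @ ss)) = last (path_pts (x, y + int h) ss)"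
  by (induction h arbitrary: y) (auto simp: add.assoc)

definition cells_between :: "cell set \<Rightarrow> cell set \<Rightarrow> cell set" where
  "cells_between A B = {(i, j). \<exists>y1 y2. (i, y1) \<in> A \<and> (i, y2) \<in> B \<and> y1 \<le> j \<and> j < y2}"

definition paths_meet_at_ends :: "cell \<Rightarrow> bool list \<Rightarrow> bool list \<Rightarrow> bool" where
  "paths_meet_at_ends s p q \<longleftrightarrow> length p = length q \<and> last (path_pts s p) = last (path_pts s q)
     \<and> set (path_pts s p) \<inter> set (path_pts s q) = {s, last (path_pts s p)}"

lemma parallelogram_polyomino_iff:
  "parallelogram_polyomino P \<longleftrightarrow>
     (\<exists>s p q. p \<noteq> [] \<and> paths_meet_at_ends s p q \<and> P = cells_between (east_starts s p) (east_starts s q))"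
  unfolding parallelogram_polyomino_def paths_meet_at_ends_def cells_between_def by blast

lemma cells_between_insert_column:
  assumes "\<forall>(x, y)\<in>A. x \<noteq> c" "\<forall>(x, y)\<in>B. x \<noteq> c"
  shows "cells_between (insert (c, y1) A) (insert (c, y2) B) = Pair c ` {y1..<y2} \<union> cells_between A B"
  using assms unfolding cells_between_def by (auto simp: image_iff) blast

lemma cells_between_first_column:
  "cells_between (east_starts (c, b) (True # pr)) (east_starts (c, b) (replicate h False @ True # qr))
     = Pair c ` {b..<b + int h} \<union> cells_between (east_starts (c + 1, b) pr) (east_starts (c + 1, b + int h) qr)"
proof -
  have "\<forall>(x, y)\<in>east_starts (c + 1, y0) ss. x \<noteq> c" for y0 ss
    using east_starts_ge by fastforce
  then show ?thesis
    by (simp add: east_starts_replicate_north cells_between_insert_column)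
qed

definition upper_descent :: "cell set \<Rightarrow> bool" where
  "upper_descent P \<longleftrightarrow> (\<exists>x y y'. y' \<le> y \<and> (x, y) \<in> P \<and> (x + 1, y') \<in> P \<and> (x + 1, y) \<notin> P)"

lemma upper_descent_not_parallelogram:
  assumes "upper_descent P"
  shows "\<not> parallelogram_polyomino P"
proof
  assume "parallelogram_polyomino P"
  then obtain s1 s2 p q where P: "P = cells_between (east_starts (s1, s2) p) (east_starts (s1, s2) q)"
    unfolding parallelogram_polyomino_iff by auto
  from assms obtain x y y' where "y' \<le> y" "(x, y) \<in> P" "(x + 1, y') \<in> P" "(x + 1, y) \<notin> P"
    unfolding upper_descent_def by blast
  then obtain t u1 u2 where "(x, t) \<in> east_starts (s1, s2) q" "y < t"
     "(x + 1, u1) \<in> east_starts (s1, s2) p" "(x + 1, u2) \<in> east_starts (s1, s2) q" "u1 \<le> y'" "y' < u2"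
     "\<not> (u1 \<le> y \<and> y < u2)"
    unfolding P cells_between_def by blast
  moreover have "t \<le> u2"
    using east_starts_mono[of x t s1 s2 q "x + 1" u2] calculation by simp
  ultimately show False using \<open>y' \<le> y\<close> by linarith
qed

section \<open>Building a deco polyomino\<close>

lemma pasted_column_eq: "{(c - 1, b + int t) |t. t < k} = Pair (c - 1) ` {b..<b + int k}"
proof -
  have "(\<exists>t. y = b + int t \<and> t < k) \<longleftrightarrow> b \<le> y \<and> y < b + int k" for y
    by (metis add_less_cancel_left le_add_same_cancel1 of_nat_0_le_iff of_nat_less_iff zle_iff_zadd)
  then show ?thesis by (auto simp: image_iff)
qed

lemma finite_deco_step: "finite P \<Longrightarrow> finite (deco_step P a)"
  unfolding deco_step_def by (simp add: Let_def pasted_column_eq)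

lemma subset_deco_step: "P \<subseteq> deco_step P a"
  unfolding deco_step_def by (auto simp: Let_def)

lemma
  assumes "P \<noteq> {}" "Min (fst ` P) = c" "Min {y. (c, y) \<in> P} = b"
  shows deco_step_elevation: "deco_step P 0 = insert (c, b - 1) P"
    and deco_step_paste: "0 < a \<Longrightarrow> deco_step P a = P \<union> Pair (c - 1) ` {b..<b + int a}"
  using assms unfolding deco_step_def by (simp_all add: Let_def pasted_column_eq)

lemma upper_descent_deco_step:
  assumes "upper_descent P" "finite P"
  shows "upper_descent (deco_step P a)"
proof -
  obtain x y y' where "y' \<le> y" "(x, y) \<in> P" "(x + 1, y') \<in> P" and gap: "(x + 1, y) \<notin> P"
    using assms(1) unfolding upper_descent_def by blast
  define c where "c = Min (fst ` P)"
  define b where "b = Min {y. (c, y) \<in> P}"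
  have "P \<noteq> {}" using \<open>(x, y) \<in> P\<close> by auto
  have "c \<le> x + 1" unfolding c_def using assms(2) \<open>(x + 1, y') \<in> P\<close> by (intro Min_le) force+
  have "finite {y. (c, y) \<in> P}"
    by (rule finite_subset[of _ "snd ` P"]) (use assms(2) in force)+
  have "(x + 1, y) \<notin> deco_step P a"
  proof (cases "a = 0")
    case True
    have "(x + 1, y) \<noteq> (c, b - 1)"
    proof
      assume "(x + 1, y) = (c, b - 1)"
      moreover have "b \<le> y'" unfolding b_def
        using \<open>finite {y. (c, y) \<in> P}\<close> \<open>(x + 1, y') \<in> P\<close> calculation by (intro Min_le) auto
      ultimately show False using \<open>y' \<le> y\<close> by simp
    qed
    then show ?thesis
      using True gap deco_step_elevation[OF \<open>P \<noteq> {}\<close> c_def[symmetric] b_def[symmetric]] by simp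
  next
    case False
    then show ?thesis
      using gap \<open>c \<le> x + 1\<close> deco_step_paste[OF \<open>P \<noteq> {}\<close> c_def[symmetric] b_def[symmetric]]
      by (auto simp: image_iff)
  qed
  then show ?thesis
    unfolding upper_descent_def using subset_deco_step \<open>y' \<le> y\<close> \<open>(x, y) \<in> P\<close> \<open>(x + 1, y') \<in> P\<close>
    by blast
qed

section \<open>Parallelogram shapes\<close>

definition parallelogram_shape :: "cell set \<Rightarrow> nat \<Rightarrow> int \<Rightarrow> int \<Rightarrow> bool list \<Rightarrow> bool list \<Rightarrow> bool" where
  "parallelogram_shape P h c b pr qr \<longleftrightarrow> 1 \<le> h \<and> finite P
     \<and> paths_meet_at_ends (c, b) (True # pr) (replicate h False @ True # qr)
     \<and> P = Pair c ` {b..<b + int h} \<union> cells_between (east_starts (c + 1, b) pr) (east_starts (c + 1, b + int h) qr)"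

lemma parallelogram_shape_parallelogram:
  "parallelogram_shape P h c b pr qr \<Longrightarrow> parallelogram_polyomino P"
  unfolding parallelogram_polyomino_iff parallelogram_shape_def cells_between_first_column[symmetric]
  by blast

lemma parallelogram_shape_single: "parallelogram_shape {(0, 0)} 1 0 0 [False] []"
  unfolding parallelogram_shape_def paths_meet_at_ends_def cells_between_def
  by (auto simp: image_iff)

lemma parallelogram_shapeD:
  assumes "parallelogram_shape P h c b pr qr"
  shows "1 \<le> h" "finite P" "paths_meet_at_ends (c, b) (True # pr) (replicate h False @ True # qr)"
    "P = Pair c ` {b..<b + int h} \<union> cells_between (east_starts (c + 1, b) pr) (east_starts (c + 1, b + int h) qr)"
  using assms unfolding parallelogram_shape_def by auto

lemma cells_between_east_starts_ge:
  assumes "(x, y) \<in> cells_between (east_starts (x0, y0) ss) B"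
  shows "x0 \<le> x"
proof -
  obtain y1 where "(x, y1) \<in> east_starts (x0, y0) ss"
    using assms unfolding cells_between_def by blast
  then show ?thesis using east_starts_ge by blast
qed

lemma
  assumes "parallelogram_shape P h c b pr qr"
  shows parallelogram_shape_right_of: "(x, y) \<in> P \<Longrightarrow> c \<le> x"
    and parallelogram_shape_leftmost_column: "(c, y) \<in> P \<longleftrightarrow> b \<le> y \<and> y < b + int h"
  using parallelogram_shapeD(4)[OF assms]
    cells_between_east_starts_ge[of x y "c + 1" b pr "east_starts (c + 1, b + int h) qr"]
    cells_between_east_starts_ge[of c y "c + 1" b pr "east_starts (c + 1, b + int h) qr"]
  by auto

lemma parallelogram_shape_leftmost:
  assumes "parallelogram_shape P h c b pr qr"
  shows "P \<noteq> {}" "Min (fst ` P) = c" "Min {y. (c, y) \<in> P} = b"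
proof -
  have "finite P" "1 \<le> h" using parallelogram_shapeD[OF assms] by simp_all
  have "(c, b) \<in> P"
    using parallelogram_shape_leftmost_column[OF assms] \<open>1 \<le> h\<close> by simp
  then show "P \<noteq> {}" by auto
  show "Min (fst ` P) = c"
  proof (rule Min_eqI)
    show "finite (fst ` P)" using \<open>finite P\<close> by simp
    show "c \<in> fst ` P" using \<open>(c, b) \<in> P\<close> by (rule image_eqI[rotated]) simp
  next
    fix x assume "x \<in> fst ` P"
    then show "c \<le> x" using parallelogram_shape_right_of[OF assms] by force
  qed
  have "{y. (c, y) \<in> P} = {b..<b + int h}"
    unfolding set_eq_iff by (simp add: parallelogram_shape_leftmost_column[OF assms])
  moreover have "Min {b..<b + int h} = b"
    using \<open>1 \<le> h\<close> by (intro Min_eqI) auto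
  ultimately show "Min {y. (c, y) \<in> P} = b" by simp
qed

lemma paths_meet_at_ends_elevation:
  assumes "paths_meet_at_ends (c, b) (True # pr) q"
  shows "paths_meet_at_ends (c, b - 1) (True # False # pr) (False # q)"
proof -
  let ?S = "set (path_pts (c + 1, b) pr)" and ?Q = "set (path_pts (c, b) q)"
  have shift: "insert u (insert v X) \<inter> insert u Q = {u, e}"
    if "insert a X \<inter> Q = {a, e}" "a \<notin> X" "e \<in> X" "v \<notin> Q" for u v a e :: cell and X Q
    using that by (auto simp: set_eq_iff)
  have "insert (c, b) ?S \<inter> ?Q = {(c, b), last (path_pts (c + 1, b) pr)}"
    using assms unfolding paths_meet_at_ends_def by simp
  moreover have "(c, b) \<notin> ?S" using path_pts_ge[of c b "c + 1" b pr] by auto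
  moreover have "last (path_pts (c + 1, b) pr) \<in> ?S" by simp
  moreover have "(c + 1, b - 1) \<notin> ?Q" using path_pts_ge[of "c + 1" "b - 1" c b q] by auto
  ultimately have "insert (c, b - 1) (insert (c + 1, b - 1) ?S) \<inter> insert (c, b - 1) ?Q
      = {(c, b - 1), last (path_pts (c + 1, b) pr)}"
    by (rule shift)
  then show ?thesis
    using assms unfolding paths_meet_at_ends_def by simp
qed

lemma paths_meet_at_ends_paste:
  assumes "paths_meet_at_ends (c, b) (True # pr) (replicate h False @ True # qr)" "1 \<le> k" "k \<le> h"
  shows "paths_meet_at_ends (c - 1, b) (True # True # pr)
           (replicate k False @ True # replicate (h - k) False @ True # qr)"
proof -
  let ?S = "set (path_pts (c, b) (True # pr))"
    and ?q = "replicate k False @ True # replicate (h - k) False @ True # qr"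
  define e where "e = last (path_pts (c, b) (True # pr))"
  define A where "A = Pair (c - 1) ` {b..<b + int k}"
  define Z where "Z = Pair c ` {b + int k..<b + int h}"
  define T where "T = set (path_pts (c, b + int h) (True # qr))"
  have hk: "b + int k + int (h - k) = b + int h" using assms by simp
  have meet: "?S \<inter> (Pair c ` {b..<b + int h} \<union> T) = {(c, b), e}"
    and last_eq: "e = last (path_pts (c, b + int h) (True # qr))"
    and len: "length (True # pr) = h + Suc (length qr)"
    using assms(1) unfolding paths_meet_at_ends_def e_def T_def
    by (simp_all only: path_pts_replicate_north last_path_pts_replicate_north length_append
        length_replicate length_Cons)
  have "e \<in> T" unfolding T_def last_eq by simp
  moreover have "(c, b) \<notin> T" unfolding T_def using assms path_pts_ge by fastforce
  moreover have "e \<in> ?S" unfolding e_def by simp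
  ultimately have ST: "?S \<inter> T = {e}" using meet by (auto simp only: set_eq_iff)
  have SZ: "?S \<inter> Z = {}"
    unfolding Z_def using assms(2) path_pts_ge[of _ _ "c + 1" b pr] by fastforce
  have SA: "?S \<inter> A = {}" "(c - 1, b + int k) \<notin> ?S"
    unfolding A_def using path_pts_ge[of _ _ c b] by fastforce+
  have "(c - 1, b) \<in> A" unfolding A_def using assms(2) by auto
  have cap: "insert u S \<inter> (A \<union> insert w (Z \<union> T)) = {u, e}"
    if "S \<inter> T = {e}" "S \<inter> Z = {}" "S \<inter> A = {}" "w \<notin> S" "u \<in> A" for u w :: cell and S
    using that by blast
  have "set (path_pts (c - 1, b) ?q) = A \<union> insert (c - 1, b + int k) (Z \<union> T)"
    unfolding A_def Z_def T_def by (simp add: path_pts_replicate_north hk)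
  moreover have "set (path_pts (c - 1, b) (True # True # pr)) = insert (c - 1, b) ?S"
    by simp
  moreover have "last (path_pts (c - 1, b) (True # True # pr)) = e"
    unfolding e_def by simp
  moreover have "last (path_pts (c - 1, b) ?q) = e"
    unfolding last_eq by (simp add: last_path_pts_replicate_north hk)
  moreover have "length (True # True # pr) = length ?q"
    using len assms(3) by simp
  ultimately show ?thesis
    unfolding paths_meet_at_ends_def using cap[OF ST SZ SA \<open>(c - 1, b) \<in> A\<close>] by presburger
qed

lemma parallelogram_shape_elevation:
  assumes "parallelogram_shape P h c b pr qr"
  shows "parallelogram_shape (insert (c, b - 1) P) (Suc h) c (b - 1) (False # pr) qr"
proof -
  note meet = parallelogram_shapeD(3)[OF assms(1)]
    and P = parallelogram_shapeD(4)[OF assms(1)]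
    and parallelogram_shapeD(2)[OF assms(1)]
  have "{b - 1..<b - 1 + int (Suc h)} = insert (b - 1) {b..<b + int h}"
    by auto
  then have "insert (c, b - 1) P = Pair c ` {b - 1..<b - 1 + int (Suc h)}
      \<union> cells_between (east_starts (c + 1, b - 1) (False # pr)) (east_starts (c + 1, b - 1 + int (Suc h)) qr)"
    unfolding P by simp
  moreover have "paths_meet_at_ends (c, b - 1) (True # False # pr) (replicate (Suc h) False @ True # qr)"
    using paths_meet_at_ends_elevation[OF meet] by simp
  moreover have "finite (insert (c, b - 1) P)" using \<open>finite P\<close> by simp
  ultimately show ?thesis
    unfolding parallelogram_shape_def by simp
qed

lemma parallelogram_shape_paste:
  assumes "parallelogram_shape P h c b pr qr" "1 \<le> k" "k \<le> h"
  shows "parallelogram_shape (P \<union> Pair (c - 1) ` {b..<b + int k}) k (c - 1) b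
           (True # pr) (replicate (h - k) False @ True # qr)"
proof -
  note meet = parallelogram_shapeD(3)[OF assms(1)]
    and P = parallelogram_shapeD(4)[OF assms(1)]
    and parallelogram_shapeD(2)[OF assms(1)]
  have "east_starts (c, b + int k) (replicate (h - k) False @ True # qr) = east_starts (c, b) (replicate h False @ True # qr)"
    using assms(3) by (simp add: east_starts_replicate_north)
  then have "cells_between (east_starts (c - 1 + 1, b) (True # pr))
      (east_starts (c - 1 + 1, b + int k) (replicate (h - k) False @ True # qr)) = P"
    unfolding P cells_between_first_column[symmetric] by simp
  then show ?thesis
    using \<open>finite P\<close> assms(2) paths_meet_at_ends_paste[OF meet assms(2,3)]
    unfolding parallelogram_shape_def by auto
qed

lemma parallelogram_shape_overlong_paste:
  assumes "parallelogram_shape P h c b pr qr" "h < k"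
  shows "upper_descent (P \<union> Pair (c - 1) ` {b..<b + int k})"
proof -
  note parallelogram_shapeD(1)[OF assms(1)]
  then have "(c - 1 + 1, b) \<in> P"
    using parallelogram_shape_leftmost_column[OF assms(1), of b] by simp
  moreover have "(c - 1 + 1, b + int k - 1) \<notin> P"
    using parallelogram_shape_leftmost_column[OF assms(1), of "b + int k - 1"] assms(2) by simp
  moreover have "(c - 1, b + int k - 1) \<in> Pair (c - 1) ` {b..<b + int k}"
    using assms(2) by (intro imageI) simp
  moreover have "(c - 1 + 1, b + int k - 1) \<notin> Pair (c - 1) ` {b..<b + int k}"
    by auto
  moreover have "b \<le> b + int k - 1" using assms(2) by simp
  ultimately show ?thesis
    unfolding upper_descent_def by blast
qed

lemma
  assumes "parallelogram_shape P h c b pr qr"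
  shows parallelogram_shape_deco_step:
      "a \<le> h \<Longrightarrow> \<exists>c b pr qr. parallelogram_shape (deco_step P a) (if a = 0 then Suc h else a) c b pr qr"
    and upper_descent_deco_step_overlong: "h < a \<Longrightarrow> upper_descent (deco_step P a)"
proof -
  note leftmost = parallelogram_shape_leftmost[OF assms]
  show "\<exists>c b pr qr. parallelogram_shape (deco_step P a) (if a = 0 then Suc h else a) c b pr qr"
    if "a \<le> h"
  proof (cases "a = 0")
    case True
    then show ?thesis
      using parallelogram_shape_elevation[OF assms] deco_step_elevation[OF leftmost] by auto
  next
    case False
    then show ?thesis
      using parallelogram_shape_paste[OF assms _ that] deco_step_paste[OF leftmost, of a] by auto
  qed
  show "upper_descent (deco_step P a)" if "h < a"
    using parallelogram_shape_overlong_paste[OF assms that] deco_step_paste[OF leftmost, of a] that by simp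
qed

section \<open>Codes whose pastes fit\<close>

text \<open>A code is the list \<open>(a\<^sub>n, \<dots>, a\<^sub>1)\<close>, i.e. the reversed list of steps. If all pastes fit,
  \<open>leftmost_height\<close> is the height of the leftmost column of the polyomino built from it; the last
  entry \<open>a\<^sub>1\<close> always produces a single cell, whatever its value.\<close>
fun leftmost_height :: "nat list \<Rightarrow> nat" where
  "leftmost_height [] = 0"
| "leftmost_height (a # code) = (if code = [] then 1 else if a = 0 then Suc (leftmost_height code) else a)"

fun pastes_fit :: "nat list \<Rightarrow> bool" where
  "pastes_fit [] = True"
| "pastes_fit (a # code) \<longleftrightarrow> pastes_fit code \<and> (code \<noteq> [] \<and> a \<noteq> 0 \<longrightarrow> a \<le> leftmost_height code)"

lemma leftmost_height_ge:
  assumes "code \<noteq> []" "v \<le> length code" "\<And>l. l < length code \<Longrightarrow> code ! l \<noteq> 0 \<Longrightarrow> v \<le> code ! l + l"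
  shows "v \<le> leftmost_height code"
  using assms
proof (induction code arbitrary: v)
  case Nil
  then show ?case by simp
next
  case (Cons a code)
  show ?case
  proof (cases "code = []")
    case True
    then show ?thesis using Cons.prems(2) by simp
  next
    case False
    show ?thesis
    proof (cases "a = 0")
      case True
      have "v - 1 \<le> leftmost_height code"
      proof (rule Cons.IH[OF False])
        show "v - 1 \<le> length code" using Cons.prems(2) by simp
        fix l assume "l < length code" "code ! l \<noteq> 0"
        then show "v - 1 \<le> code ! l + l" using Cons.prems(3)[of "Suc l"] by simp
      qed
      then show ?thesis using True False by simp
    next
      case False
      then show ?thesis using Cons.prems(3)[of 0] \<open>code \<noteq> []\<close> by simp
    qed
  qed
qed

lemma leftmost_height_le:
  assumes "pastes_fit code" "l < length code" "code ! l \<noteq> 0"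
  shows "leftmost_height code \<le> code ! l + l"
  using assms
proof (induction code arbitrary: l)
  case Nil
  then show ?case by simp
next
  case (Cons a code)
  show ?case
  proof (cases l)
    case 0
    then show ?thesis using Cons.prems by simp
  next
    case (Suc l')
    then have "code \<noteq> []" "leftmost_height code \<le> code ! l' + l'"
      using Cons by auto
    then show ?thesis using Cons.prems(1) Suc by auto
  qed
qed

lemma pastes_fit_drop: "pastes_fit code \<Longrightarrow> pastes_fit (drop k code)"
  by (induction code arbitrary: k) (auto simp: drop_Cons split: nat.split)

lemma pastes_fit_iff:
  "pastes_fit code \<longleftrightarrow>
     (\<forall>k. Suc k < length code \<longrightarrow> code ! k \<noteq> 0 \<longrightarrow> code ! k \<le> leftmost_height (drop (Suc k) code))"
proof (induction code)
  case Nil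
  then show ?case by simp
next
  case (Cons a code)
  have split: "(\<forall>k. Q k) \<longleftrightarrow> Q 0 \<and> (\<forall>k. Q (Suc k))" for Q :: "nat \<Rightarrow> bool"
    by (metis not0_implies_Suc)
  show ?case
    unfolding split[where Q = "\<lambda>k. Suc k < length (a # code) \<longrightarrow> (a # code) ! k \<noteq> 0
      \<longrightarrow> (a # code) ! k \<le> leftmost_height (drop (Suc k) (a # code))"]
    by (auto simp: Cons.IH)
qed

lemma deco_of_steps_snoc: "deco_of_steps (as @ [a]) = deco_step (deco_of_steps as) a"
  by (simp add: deco_of_steps_def)

lemma finite_deco_of_steps: "finite (deco_of_steps as)"
  by (induction as rule: rev_induct) (simp_all add: deco_of_steps_snoc finite_deco_step,
      simp add: deco_of_steps_def)

lemma deco_of_steps_shape: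
  assumes "as \<noteq> []"
  shows "(pastes_fit (rev as) \<longrightarrow>
            (\<exists>c b pr qr. parallelogram_shape (deco_of_steps as) (leftmost_height (rev as)) c b pr qr))
       \<and> (\<not> pastes_fit (rev as) \<longrightarrow> upper_descent (deco_of_steps as))"
  using assms
proof (induction as rule: rev_induct)
  case Nil
  then show ?case by simp
next
  case (snoc a as)
  show ?case
  proof (cases "as = []")
    case True
    then show ?thesis
      using parallelogram_shape_single by (auto simp: deco_of_steps_def deco_step_def)
  next
    case False
    let ?P = "deco_of_steps as" and ?h = "leftmost_height (rev as)"
    have fit: "pastes_fit (rev (as @ [a])) \<longleftrightarrow> pastes_fit (rev as) \<and> (a \<noteq> 0 \<longrightarrow> a \<le> ?h)"
      and height: "leftmost_height (rev (as @ [a])) = (if a = 0 then Suc ?h else a)"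
      using False by simp_all
    show ?thesis
    proof (cases "pastes_fit (rev as)")
      case False
      then show ?thesis
        using snoc.IH \<open>as \<noteq> []\<close> upper_descent_deco_step[OF _ finite_deco_of_steps]
        unfolding fit deco_of_steps_snoc by blast
    next
      case True
      then obtain c b pr qr where shape: "parallelogram_shape ?P ?h c b pr qr"
        using snoc.IH \<open>as \<noteq> []\<close> by blast
      show ?thesis
      proof (cases "a \<le> ?h")
        case True
        then show ?thesis
          using parallelogram_shape_deco_step[OF shape] \<open>pastes_fit (rev as)\<close>
          unfolding fit height deco_of_steps_snoc by simp
      next
        case False
        then show ?thesis
          using upper_descent_deco_step_overlong[OF shape] unfolding fit deco_of_steps_snoc by simp
      qed
    qed
  qed
qed

lemma parallelogram_deco_of_steps_iff:
  assumes "as \<noteq> []"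
  shows "parallelogram_polyomino (deco_of_steps as) \<longleftrightarrow> pastes_fit (rev as)"
  using deco_of_steps_shape[OF assms] parallelogram_shape_parallelogram upper_descent_not_parallelogram
  by metis

section \<open>Right inversion vectors\<close>

lemma right_inv_le: "right_inv \<pi> n i \<le> n - i"
proof -
  have "right_inv \<pi> n i \<le> card {i<..n}"
    unfolding right_inv_def by (rule card_mono) auto
  then show ?thesis by simp
qed

lemma right_inv_pos_iff: "0 < right_inv \<pi> n i \<longleftrightarrow> (\<exists>j. i < j \<and> j \<le> n \<and> \<pi> j < \<pi> i)"
  unfolding right_inv_def by (auto simp: card_gt_0_iff)

lemma right_inv_le_of_less:
  assumes "i < l" "l \<le> n" "\<pi> i < \<pi> l"
  shows "right_inv \<pi> n i \<le> (l - i - 1) + right_inv \<pi> n l"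
proof -
  have "{j. i < j \<and> j \<le> n \<and> \<pi> j < \<pi> i} \<subseteq> {i<..<l} \<union> {j. l < j \<and> j \<le> n \<and> \<pi> j < \<pi> l}"
    using assms by (auto simp: not_less_iff_gr_or_eq)
  then have "right_inv \<pi> n i \<le> card ({i<..<l} \<union> {j. l < j \<and> j \<le> n \<and> \<pi> j < \<pi> l})"
    unfolding right_inv_def by (intro card_mono) simp_all
  also have "\<dots> \<le> card {i<..<l} + right_inv \<pi> n l"
    unfolding right_inv_def by (rule card_Un_le)
  finally show ?thesis by simp
qed

lemma right_inv_ge_of_gap:
  assumes "i < j" "j \<le> n" "\<pi> j < \<pi> i" "\<And>m. i < m \<Longrightarrow> m < j \<Longrightarrow> \<pi> m < \<pi> j"
  shows "(j - i) + right_inv \<pi> n j \<le> right_inv \<pi> n i"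
proof -
  have "{i<..j} \<union> {m. j < m \<and> m \<le> n \<and> \<pi> m < \<pi> j} \<subseteq> {m. i < m \<and> m \<le> n \<and> \<pi> m < \<pi> i}"
  proof -
    have "\<pi> m < \<pi> i" if "i < m" "m \<le> j" for m
      using assms(3) assms(4)[OF that(1)] that(2) by (cases "m = j") auto
    then show ?thesis using assms(1-3) less_trans[of _ "\<pi> j" "\<pi> i"] by auto
  qed
  then have "card ({i<..j} \<union> {m. j < m \<and> m \<le> n \<and> \<pi> m < \<pi> j}) \<le> right_inv \<pi> n i"
    unfolding right_inv_def by (intro card_mono) simp_all
  moreover have "card ({i<..j} \<union> {m. j < m \<and> m \<le> n \<and> \<pi> m < \<pi> j}) = (j - i) + right_inv \<pi> n j"
    unfolding right_inv_def by (subst card_Un_disjoint) auto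
  ultimately show ?thesis by simp
qed

lemma right_inv_ge_of_greater:
  assumes "inj \<pi>" "i < j" "j \<le> n" "\<pi> j < \<pi> i"
  obtains i' where "i \<le> i'" "i' < j" "(j - i') + right_inv \<pi> n j \<le> right_inv \<pi> n i'"
proof -
  define M where "M = {m. i \<le> m \<and> m < j \<and> \<pi> j < \<pi> m}"
  have "finite M" "i \<in> M" unfolding M_def using assms by auto
  define i' where "i' = Max M"
  have "i' \<in> M" unfolding i'_def using \<open>finite M\<close> \<open>i \<in> M\<close> by (intro Max_in) auto
  then have "i \<le> i'" "i' < j" "\<pi> j < \<pi> i'" unfolding M_def by auto
  have "\<pi> m < \<pi> j" if "i' < m" "m < j" for m
  proof -
    have "m \<notin> M" using that Max_ge[OF \<open>finite M\<close>, of m] unfolding i'_def by auto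
    then have "\<not> \<pi> j < \<pi> m" using that \<open>i \<le> i'\<close> unfolding M_def by simp
    moreover have "\<pi> m \<noteq> \<pi> j" using that by (simp add: inj_eq[OF assms(1)])
    ultimately show ?thesis by simp
  qed
  then have "(j - i') + right_inv \<pi> n j \<le> right_inv \<pi> n i'"
    by (rule right_inv_ge_of_gap[OF \<open>i' < j\<close> assms(3) \<open>\<pi> j < \<pi> i'\<close>])
  then show ?thesis using that \<open>i \<le> i'\<close> \<open>i' < j\<close> by blast
qed

lemma avoids_321D:
  assumes "avoids_321 \<pi> n" "1 \<le> i" "i < j" "j < k" "k \<le> n" "\<pi> k < \<pi> j"
  shows "\<pi> i \<le> \<pi> j"
  using assms unfolding avoids_321_def not_less[symmetric] by blast

lemma avoids_321_imp_pastes_fit: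
  assumes "avoids_321 \<pi> n" "inj \<pi>"
  shows "pastes_fit (map (right_inv \<pi> n) [1..<n + 1])"
  unfolding pastes_fit_iff
proof (intro allI impI)
  let ?c = "right_inv \<pi> n"
  fix k
  assume "Suc k < length (map ?c [1..<n + 1])" "map ?c [1..<n + 1] ! k \<noteq> 0"
  then have "Suc k < n" and "?c (Suc k) \<noteq> 0" by (simp_all del: upt_Suc)
  have "?c (Suc k) \<le> leftmost_height (map ?c [Suc (Suc k)..<n + 1])"
  proof (rule leftmost_height_ge)
    show "map ?c [Suc (Suc k)..<n + 1] \<noteq> []" using \<open>Suc k < n\<close> by simp
    show "?c (Suc k) \<le> length (map ?c [Suc (Suc k)..<n + 1])"
      using right_inv_le[of \<pi> n "Suc k"] by (simp del: upt_Suc)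
  next
    fix l
    assume "l < length (map ?c [Suc (Suc k)..<n + 1])" "map ?c [Suc (Suc k)..<n + 1] ! l \<noteq> 0"
    then have "Suc (Suc k) + l \<le> n" and "0 < ?c (Suc (Suc k) + l)" by (simp_all del: upt_Suc)
    then obtain m where "Suc (Suc k) + l < m" "m \<le> n" "\<pi> m < \<pi> (Suc (Suc k) + l)"
      unfolding right_inv_pos_iff by blast
    then have "\<pi> (Suc k) \<le> \<pi> (Suc (Suc k) + l)"
      by (intro avoids_321D[OF assms(1)]) simp_all
    moreover have "\<pi> (Suc k) \<noteq> \<pi> (Suc (Suc k) + l)" by (simp add: inj_eq[OF assms(2)])
    ultimately have "\<pi> (Suc k) < \<pi> (Suc (Suc k) + l)" by simp
    then show "?c (Suc k) \<le> map ?c [Suc (Suc k)..<n + 1] ! l + l"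
      using right_inv_le_of_less[of "Suc k" "Suc (Suc k) + l" n \<pi>] \<open>Suc (Suc k) + l \<le> n\<close> by (simp del: upt_Suc)
  qed
  then show "map ?c [1..<n + 1] ! k \<le> leftmost_height (drop (Suc k) (map ?c [1..<n + 1]))"
    using \<open>Suc k < n\<close> by (simp add: drop_map del: upt_Suc)
qed

lemma pastes_fit_imp_avoids_321:
  assumes "pastes_fit (map (right_inv \<pi> n) [1..<n + 1])" "inj \<pi>"
  shows "avoids_321 \<pi> n"
  unfolding avoids_321_def
proof
  let ?c = "right_inv \<pi> n" and ?code = "map (right_inv \<pi> n) [1..<n + 1]"
  assume "\<exists>i j k. 1 \<le> i \<and> i < j \<and> j < k \<and> k \<le> n \<and> \<pi> j < \<pi> i \<and> \<pi> k < \<pi> j"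
  then obtain i j k where "1 \<le> i" "i < j" "j < k" "k \<le> n" "\<pi> j < \<pi> i" "\<pi> k < \<pi> j"
    by blast
  have "j \<le> n" using \<open>j < k\<close> \<open>k \<le> n\<close> by simp
  obtain i' where "i \<le> i'" "i' < j" and jump: "(j - i') + ?c j \<le> ?c i'"
    using right_inv_ge_of_greater[OF assms(2) \<open>i < j\<close> \<open>j \<le> n\<close> \<open>\<pi> j < \<pi> i\<close>] .
  have "0 < ?c j" unfolding right_inv_pos_iff using \<open>j < k\<close> \<open>k \<le> n\<close> \<open>\<pi> k < \<pi> j\<close> by blast
  have "Suc (i' - 1) < length ?code" "?code ! (i' - 1) = ?c i'" "Suc (i' - 1) = i'"
    using \<open>1 \<le> i\<close> \<open>i \<le> i'\<close> \<open>i' < j\<close> \<open>j \<le> n\<close> by (simp_all del: upt_Suc)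
  moreover have "?c i' \<noteq> 0" using jump \<open>i' < j\<close> by simp
  ultimately have "?c i' \<le> leftmost_height (drop i' ?code)"
    using assms(1)[unfolded pastes_fit_iff, rule_format, of "i' - 1"] by simp
  also have "\<dots> \<le> drop i' ?code ! (j - i' - 1) + (j - i' - 1)"
    using \<open>0 < ?c j\<close> \<open>i' < j\<close> \<open>j < k\<close> \<open>k \<le> n\<close>
    by (intro leftmost_height_le pastes_fit_drop assms(1)) (auto simp del: upt_Suc)
  also have "\<dots> = ?c j + (j - i' - 1)"
    using \<open>1 \<le> i\<close> \<open>i \<le> i'\<close> \<open>i' < j\<close> \<open>j \<le> n\<close> by (simp del: upt_Suc)
  finally show False using jump \<open>0 < ?c j\<close> \<open>i' < j\<close> by linarith
qed

lemma rev_map_upt_Suc: "rev (map f [1..<n + 1]) = map (\<lambda>j. f (n + 1 - j)) [1..<n + 1]"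
  by (rule map_upt_eqI[symmetric]) (auto simp: rev_nth Suc_diff_Suc simp del: upt_Suc)

theorem mainTheorem1:
  fixes n :: nat and \<pi> :: "nat \<Rightarrow> nat"
  assumes "n \<ge> 1" and "\<pi> permutes {1..n}"
  shows "avoids_321 \<pi> n \<longleftrightarrow> parallelogram_polyomino (Phi2 \<pi> n)"
proof -
  let ?code = "map (right_inv \<pi> n) [1..<n + 1]"
  have "Phi2 \<pi> n = deco_of_steps (rev ?code)"
    unfolding Phi2_def rev_map_upt_Suc ..
  moreover have "rev ?code \<noteq> []" using assms(1) by simp
  moreover have "inj \<pi>" using assms(2) by (rule permutes_inj)
  ultimately show ?thesis
    using parallelogram_deco_of_steps_iff[of "rev ?code"]
      avoids_321_imp_pastes_fit[of \<pi> n] pastes_fit_imp_avoids_321[of \<pi> n] by auto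
qed

end
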